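(* Let $H$ be a Hermitian operator (Hamiltonian) on $\mathbb{C}^d$, let $\{\mathcal{O}_i\}_{i\in\mathcal{I}}$ be a finite family of Hermitian operators on $\mathbb{C}^d$ indexed by a finite set $\mathcal{I}$, and let $\rho$ be a density matrix on $\mathbb{C}^d$ with $o_i=\mathrm{tr}(\rho\,\mathcal{O}_i)$ for all $i\in\mathcal{I}$. Define the feasible set $$\Omega_{\mathcal{I}}=\{X:\ X\succeq 0,\ \mathrm{tr}(X)=1,\ \mathrm{tr}(X\mathcal{O}_i)=o_i\ \forall i\in\mathcal{I}\}.$$ Then for every unitary $U\in\mathcal{U}(d)$, $$\min_{X\in\Omega_{\mathcal{I}}}\big[\mathrm{tr}(HX)-\mathrm{tr}(HUXU^\dagger)\big]\ \le\ \min_{X\in\Omega_{\mathcal{I}}}\max_{V\in\mathcal{U}(d)}\big[\mathrm{tr}(HX)-\mathrm{tr}(HVXV^\dagger)\big]\ \le\ \mathcal{E}(\rho,H).$$ In particular, if $\tilde\rho\in\Omega_{\mathcal{I}}$ is any feasible state (e.g. a minimizer over $\Omega_{\mathcal{I}}$ of some linear function, or of the purity $\mathrm{tr}(X^2)$), with spectral decomposition $\tilde\rho=\sum_j\tilde r_j|\tilde r_j\rangle\langle\tilde r_j|$, $\tilde r_1\ge\tilde r_2\ge\cdots$, and $H=\sum_j E_j|E_j\rangle\langle E_j|$ with $E_1\le E_2\le\cdots$, and $\tilde U_\star=\sum_j|E_j\rangle\langle\tilde r_j|$, then $$\mathcal{E}_{\rm LB}:=\min_{X\in\Omega_{\mathcal{I}}}\big[\mathrm{tr}(HX)-\mathrm{tr}(H\tilde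 U_\star X\tilde U_\star^\dagger)\big]\ \le\ \mathcal{E}(\rho,H).$$
   Context: For a density matrix $\rho$ on $\mathbb{C}^d$ and a Hamiltonian $H$, the ergotropy is $\mathcal{E}(\rho,H)=\max_{U\in\mathcal{U}(d)}\big[\mathrm{tr}(\rho H)-\mathrm{tr}(HU\rho U^\dagger)\big]$, where $\mathcal{U}(d)$ is the group of $d\times d$ unitaries. *)

theory Defs
  imports "HOL-Analysis.Analysis"
begin

text \<open>Complex d x d matrices are modelled as complex^'n^'n with d = CARD('n).\<close>

definition cadj :: "complex^'n^'m \<Rightarrow> complex^'m^'n" where
  "cadj A = (\<chi> i j. cnj (A $ j $ i))"

definition cinner_vec :: "complex^'n \<Rightarrow> complex^'n \<Rightarrow> complex" where
  "cinner_vec u v = (\<Sum>i\<in>UNIV. cnj (u $ i) * v $ i)"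

definition outer :: "complex^'n \<Rightarrow> complex^'n \<Rightarrow> complex^'n^'n" where
  "outer u v = (\<chi> i k. u $ i * cnj (v $ k))"

definition hermitian :: "complex^'n^'n \<Rightarrow> bool" where
  "hermitian A \<longleftrightarrow> cadj A = A"

definition psd :: "complex^'n^'n \<Rightarrow> bool" where
  "psd X \<longleftrightarrow> hermitian X \<and> (\<forall>v. 0 \<le> Re (cinner_vec v (X *v v)))"

definition unitary :: "complex^'n^'n \<Rightarrow> bool" where
  "unitary U \<longleftrightarrow> cadj U ** U = mat 1"

definition density :: "complex^'n^'n \<Rightarrow> bool" where
  "density \<rho> \<longleftrightarrow> psd \<rho> \<and> trace \<rho> = 1"

text \<open>Work extracted by U from state X: tr(HX) - tr(H U X U^dagger) (real for Hermitian H, X).\<close>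
definition work :: "complex^'n^'n \<Rightarrow> complex^'n^'n \<Rightarrow> complex^'n^'n \<Rightarrow> real" where
  "work H X U = Re (trace (H ** X) - trace (H ** U ** X ** cadj U))"

definition ergotropy :: "complex^'n^'n \<Rightarrow> complex^'n^'n \<Rightarrow> real" where
  "ergotropy \<rho> H = (SUP U\<in>{U. unitary U}. work H \<rho> U)"

definition feasible :: "'i set \<Rightarrow> ('i \<Rightarrow> complex^'n^'n) \<Rightarrow> ('i \<Rightarrow> complex) \<Rightarrow> (complex^'n^'n) set" where
  "feasible I Obs ov = {X. psd X \<and> trace X = 1 \<and> (\<forall>i\<in>I. trace (X ** Obs i) = ov i)}"

end

theory Submission
  imports Defs
begin

text \<open>Testing the positive form of a state X on e_i + c e_j with |c| = 1 gives
  2 |X_ij| \<le> Re X_ii + Re X_jj \<le> 2, so the work tr(HX) - tr(HUXU\<dagger>) is bounded uniformly in the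
  state X and the unitary U. Hence all infima and suprema in the statement are finite, and the
  inequalities are the elementary chain inf_X f(X,U) \<le> inf_X sup_V f(X,V) \<le> sup_V f(\<rho>,V), the
  last step because \<rho> is itself feasible. The second claim is the instance U = U_\<star>, which is
  unitary as the product of the unitary with columns |E_j\<rangle> and the adjoint of the one with
  columns |r_j\<rangle>.\<close>

lemma cadj_cadj [simp]: "cadj (cadj A) = A"
  by (simp add: cadj_def vec_eq_iff)

lemma cadj_mult: "cadj (A ** B) = cadj B ** cadj A"
  by (simp add: cadj_def matrix_matrix_mult_def vec_eq_iff mult.commute)

lemma cinner_vec_add_left: "cinner_vec (u + v) w = cinner_vec u w + cinner_vec v w"
  by (simp add: cinner_vec_def sum.distrib distrib_right)

lemma cinner_vec_add_right: "cinner_vec u (v + w) = cinner_vec u v + cinner_vec u w"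
  by (simp add: cinner_vec_def sum.distrib distrib_left)

lemma matrix_vector_mult_axis_nth: "(A *v axis j b) $ r = A$r$j * b"
proof -
  have "(A *v axis j b) $ r = (\<Sum>k\<in>UNIV. if k = j then A$r$k * b else 0)"
    unfolding matrix_vector_mult_def vec_lambda_beta by (rule sum.cong) (auto simp: axis_def)
  also have "\<dots> = A$r$j * b"
    by simp
  finally show ?thesis .
qed

lemma cinner_vec_axis_left: "cinner_vec (axis i a) v = cnj a * v $ i"
proof -
  have "cinner_vec (axis i a) v = (\<Sum>r\<in>UNIV. if r = i then cnj a * v $ r else 0)"
    unfolding cinner_vec_def by (rule sum.cong) (auto simp: axis_def)
  also have "\<dots> = cnj a * v $ i"
    by simp
  finally show ?thesis .
qed

lemma cinner_vec_axis_mult_axis: "cinner_vec (axis i a) (A *v axis j b) = cnj a * A$i$j * b"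
  by (simp add: cinner_vec_axis_left matrix_vector_mult_axis_nth mult.assoc)

lemma cinner_vec_mult_cadj: "cinner_vec u (A *v w) = cinner_vec (cadj A *v u) w"
proof -
  have "cinner_vec u (A *v w) = (\<Sum>i\<in>UNIV. \<Sum>k\<in>UNIV. cnj (u$i) * A$i$k * w$k)"
    unfolding cinner_vec_def matrix_vector_mult_def by (simp add: sum_distrib_left mult.assoc)
  also have "\<dots> = (\<Sum>k\<in>UNIV. \<Sum>i\<in>UNIV. cnj (u$i) * A$i$k * w$k)"
    by (rule sum.swap)
  also have "\<dots> = cinner_vec (cadj A *v u) w"
    unfolding cinner_vec_def matrix_vector_mult_def cadj_def
    by (simp add: sum_distrib_left sum_distrib_right mult_ac)
  finally show ?thesis .
qed

lemma hermitian_entry: "hermitian A \<Longrightarrow> A$j$i = cnj (A$i$j)"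
  unfolding hermitian_def cadj_def by (metis vec_lambda_beta)

lemma psd_diag_nonneg: "psd A \<Longrightarrow> 0 \<le> Re (A$i$i)"
  using cinner_vec_axis_mult_axis[of i 1 A i 1] unfolding psd_def
  by (metis complex_cnj_one mult_1 mult_1_right)

lemma cinner_vec_quadratic_two_axes:
  "cinner_vec (axis i 1 + axis j c) (A *v (axis i 1 + axis j c))
     = A$i$i + A$i$j * c + cnj c * A$j$i + cnj c * A$j$j * c"
  by (simp add: matrix_vector_right_distrib cinner_vec_add_left cinner_vec_add_right
      cinner_vec_axis_mult_axis)

lemma psd_entry_bound:
  assumes "psd A"
  shows "2 * cmod (A$i$j) \<le> Re (A$i$i) + Re (A$j$j)"
proof (cases "A$i$j = 0")
  case True
  then show ?thesis using psd_diag_nonneg[OF assms] by simp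
next
  case False
  define y where "y = A$i$j"
  define c where "c = - cnj y / cmod y"
  have "cmod y \<noteq> 0" using False by (simp add: y_def)
  have yy: "cnj y * y = of_real ((cmod y)\<^sup>2)"
    by (subst mult.commute) (rule complex_norm_square[symmetric])
  have cy: "c * y = - cmod y"
  proof -
    have "c * y = - (cnj y * y) / cmod y" by (simp add: c_def)
    also have "\<dots> = - cmod y" using \<open>cmod y \<noteq> 0\<close> by (simp add: yy power2_eq_square)
    finally show ?thesis .
  qed
  have cc: "cnj c * c = 1"
  proof -
    have "cnj c * c = (cnj y * y) / (cmod y * cmod y)" by (simp add: c_def)
    also have "\<dots> = 1" using \<open>cmod y \<noteq> 0\<close> by (simp add: yy power2_eq_square)
    finally show ?thesis .
  qed
  have "A$j$i = cnj y"
    using assms hermitian_entry[of A i j] by (simp add: psd_def y_def)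
  then have "cinner_vec (axis i 1 + axis j c) (A *v (axis i 1 + axis j c))
      = A$i$i + c * y + cnj (c * y) + (cnj c * c) * A$j$j"
    unfolding cinner_vec_quadratic_two_axes y_def by (simp add: ac_simps)
  also have "\<dots> = A$i$i + A$j$j - 2 * cmod y"
    using cy cc by simp
  finally have quadratic_form: "cinner_vec (axis i 1 + axis j c) (A *v (axis i 1 + axis j c))
      = A$i$i + A$j$j - 2 * cmod y" .
  have "0 \<le> Re (cinner_vec (axis i 1 + axis j c) (A *v (axis i 1 + axis j c)))"
    using assms by (simp add: psd_def)
  then show ?thesis by (simp add: quadratic_form y_def)
qed

lemma density_entry_bound:
  assumes "density A"
  shows "cmod (A$i$j) \<le> 1"
proof -
  have diag_nonneg: "0 \<le> Re (A$k$k)" for k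
    using assms psd_diag_nonneg by (auto simp: density_def)
  have "(\<Sum>k\<in>UNIV. Re (A$k$k)) = 1"
    using assms by (simp add: density_def trace_def flip: Re_sum)
  then have diag_le_1: "Re (A$k$k) \<le> 1" for k
    using member_le_sum[of k UNIV "\<lambda>k. Re (A$k$k)"] diag_nonneg by auto
  have "2 * cmod (A$i$j) \<le> Re (A$i$i) + Re (A$j$j)"
    using assms psd_entry_bound[of A i j] by (simp add: density_def)
  then show ?thesis
    using diag_le_1[of i] diag_le_1[of j] by linarith
qed

lemma norm_trace_mult_density_le:
  assumes "density Y"
  shows "cmod (trace (H ** Y)) \<le> (\<Sum>i\<in>UNIV. \<Sum>k\<in>UNIV. cmod (H$i$k))"
proof -
  have "cmod (trace (H ** Y)) = cmod (\<Sum>i\<in>UNIV. \<Sum>k\<in>UNIV. H$i$k * Y$k$i)"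
    by (simp add: trace_def matrix_matrix_mult_def)
  also have "\<dots> \<le> (\<Sum>i\<in>UNIV. cmod (\<Sum>k\<in>UNIV. H$i$k * Y$k$i))"
    by (rule norm_sum)
  also have "\<dots> \<le> (\<Sum>i\<in>UNIV. \<Sum>k\<in>UNIV. cmod (H$i$k * Y$k$i))"
    by (intro sum_mono norm_sum)
  also have "\<dots> \<le> (\<Sum>i\<in>UNIV. \<Sum>k\<in>UNIV. cmod (H$i$k))"
    using density_entry_bound[OF assms]
    by (intro sum_mono) (simp add: norm_mult mult_left_le)
  finally show ?thesis .
qed

lemma psd_congruence:
  assumes "psd X"
  shows "psd (A ** X ** cadj A)"
proof -
  have "cadj X = X" using assms by (simp add: psd_def hermitian_def)
  then have "hermitian (A ** X ** cadj A)"
    by (simp add: hermitian_def cadj_mult matrix_mul_assoc)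
  moreover have "cinner_vec v ((A ** X ** cadj A) *v v)
      = cinner_vec (cadj A *v v) (X *v (cadj A *v v))" for v
    by (simp add: cinner_vec_mult_cadj flip: matrix_vector_mul_assoc)
  ultimately show ?thesis
    using assms by (simp add: psd_def)
qed

lemma trace_unitary_conj:
  assumes "unitary V"
  shows "trace (V ** X ** cadj V) = trace X"
proof -
  have "trace (V ** X ** cadj V) = trace (cadj V ** (V ** X))" by (rule trace_mul_sym)
  also have "\<dots> = trace X" using assms by (simp add: matrix_mul_assoc unitary_def)
  finally show ?thesis .
qed

lemma density_unitary_conj: "unitary V \<Longrightarrow> density X \<Longrightarrow> density (V ** X ** cadj V)"
  by (simp add: density_def psd_congruence trace_unitary_conj)

lemma abs_work_le:
  assumes "density X" "unitary V"
  shows "\<bar>work H X V\<bar> \<le> 2 * (\<Sum>i\<in>UNIV. \<Sum>k\<in>UNIV. cmod (H$i$k))"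
proof -
  have "H ** V ** X ** cadj V = H ** (V ** X ** cadj V)" by (simp add: matrix_mul_assoc)
  then have "\<bar>work H X V\<bar> \<le> \<bar>Re (trace (H ** X))\<bar> + \<bar>Re (trace (H ** (V ** X ** cadj V)))\<bar>"
    unfolding work_def by (simp add: abs_triangle_ineq4)
  also have "\<dots> \<le> cmod (trace (H ** X)) + cmod (trace (H ** (V ** X ** cadj V)))"
    by (intro add_mono abs_Re_le_cmod)
  finally have "\<bar>work H X V\<bar> \<le> cmod (trace (H ** X)) + cmod (trace (H ** (V ** X ** cadj V)))" .
  then show ?thesis
    using norm_trace_mult_density_le[OF assms(1), of H]
      norm_trace_mult_density_le[OF density_unitary_conj[OF assms(2,1)], of H]
    by linarith
qed

lemma INF_le_INF_SUP_le_SUP: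
  fixes f :: "'a \<Rightarrow> 'b \<Rightarrow> real"
  assumes bounded: "\<And>x y. x \<in> A \<Longrightarrow> y \<in> B \<Longrightarrow> \<bar>f x y\<bar> \<le> c"
    and "x0 \<in> A" "y0 \<in> B"
  shows "(INF x\<in>A. f x y0) \<le> (INF x\<in>A. SUP y\<in>B. f x y)"
    and "(INF x\<in>A. SUP y\<in>B. f x y) \<le> (SUP y\<in>B. f x0 y)"
proof -
  have le_SUP: "f x y \<le> (SUP y\<in>B. f x y)" if "x \<in> A" "y \<in> B" for x y
    using bounded[OF that(1)] that(2) by (intro cSUP_upper bdd_aboveI2[where M=c]) force+
  show "(INF x\<in>A. f x y0) \<le> (INF x\<in>A. SUP y\<in>B. f x y)"
    using assms le_SUP by (intro cINF_mono bdd_belowI2[where m="-c"]) force+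
  have "- c \<le> (SUP y\<in>B. f x y)" if "x \<in> A" for x
    using bounded[OF that \<open>y0 \<in> B\<close>] le_SUP[OF that \<open>y0 \<in> B\<close>] by linarith
  then show "(INF x\<in>A. SUP y\<in>B. f x y) \<le> (SUP y\<in>B. f x0 y)"
    using \<open>x0 \<in> A\<close> by (intro cINF_lower bdd_belowI2[where m="-c"])
qed

lemma unitary_cadj: "unitary U \<Longrightarrow> unitary (cadj U)"
  by (simp add: unitary_def matrix_left_right_inverse)

lemma unitary_mult:
  assumes "unitary A" "unitary B"
  shows "unitary (A ** B)"
proof -
  have "cadj (A ** B) ** (A ** B) = cadj B ** (cadj A ** A) ** B"
    by (simp add: cadj_mult matrix_mul_assoc)
  then show ?thesis
    using assms by (simp add: unitary_def)
qed

lemma unitary_of_orthonormal_columns: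
  fixes w :: "'n::finite \<Rightarrow> complex^'n"
  assumes "\<And>k l. cinner_vec (w k) (w l) = (if k = l then 1 else 0)"
  shows "unitary (\<chi> i k. w k $ i)"
  using assms by (simp add: unitary_def cadj_def matrix_matrix_mult_def cinner_vec_def mat_def vec_eq_iff)

lemma sum_outer_eq_mult_cadj:
  "(\<Sum>k\<in>UNIV. outer (u k) (v k)) = (\<chi> i k. u k $ i) ** cadj (\<chi> i k. v k $ i)"
  by (simp add: outer_def cadj_def matrix_matrix_mult_def vec_eq_iff)

lemma unitary_sum_outer_orthonormal:
  fixes u v :: "nat \<Rightarrow> complex^'n::finite"
  assumes "\<forall>j<CARD('n). \<forall>k<CARD('n). cinner_vec (u j) (u k) = (if j = k then 1 else 0)"
    and "\<forall>j<CARD('n). \<forall>k<CARD('n). cinner_vec (v j) (v k) = (if j = k then 1 else 0)"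
  shows "unitary (\<Sum>j<CARD('n). outer (u j) (v j))"
proof -
  obtain g :: "'n \<Rightarrow> nat" where g: "bij_betw g UNIV {..<CARD('n)}"
    using ex_bij_betw_finite_nat[of "UNIV :: 'n set"] by (auto simp: atLeast0LessThan)
  have "g k < CARD('n)" for k
    using g bij_betw_apply by fastforce
  moreover have "inj g"
    using g bij_betw_def by blast
  ultimately have orthonormal: "cinner_vec (w (g k)) (w (g l)) = (if k = l then 1 else 0)"
    if "\<forall>j<CARD('n). \<forall>k<CARD('n). cinner_vec (w j) (w k) = (if j = k then 1 else 0)"
    for w :: "nat \<Rightarrow> complex^'n" and k l
    using that by (auto simp: inj_eq)
  have "(\<Sum>j<CARD('n). outer (u j) (v j)) = (\<Sum>k\<in>UNIV. outer (u (g k)) (v (g k)))"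
    using sum.reindex_bij_betw[OF g, of "\<lambda>j. outer (u j) (v j)"] by simp
  also have "\<dots> = (\<chi> i k. u (g k) $ i) ** cadj (\<chi> i k. v (g k) $ i)"
    by (rule sum_outer_eq_mult_cadj)
  finally show ?thesis
    using assms
    by (simp add: unitary_mult unitary_cadj unitary_of_orthonormal_columns orthonormal)
qed

lemma density_of_feasible: "X \<in> feasible I Obs ov \<Longrightarrow> density X"
  by (simp add: feasible_def density_def)

lemma feasible_of_density:
  "density \<rho> \<Longrightarrow> \<forall>i\<in>I. ov i = trace (\<rho> ** Obs i) \<Longrightarrow> \<rho> \<in> feasible I Obs ov"
  by (simp add: feasible_def density_def)

theorem mainTheorem1:
  fixes H \<rho> :: "complex^'n^'n"
    and I :: "'i set" and Obs :: "'i \<Rightarrow> complex^'n^'n" and ov :: "'i \<Rightarrow> complex"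
  assumes "hermitian H"
    and "finite I"
    and "\<forall>i\<in>I. hermitian (Obs i)"
    and "density \<rho>"
    and "\<forall>i\<in>I. ov i = trace (\<rho> ** Obs i)"
  shows "(\<forall>U. unitary U \<longrightarrow>
            (INF X\<in>feasible I Obs ov. work H X U)
              \<le> (INF X\<in>feasible I Obs ov. SUP V\<in>{V. unitary V}. work H X V)
          \<and> (INF X\<in>feasible I Obs ov. SUP V\<in>{V. unitary V}. work H X V) \<le> ergotropy \<rho> H)
       \<and> (\<forall>\<rho>t rt rv E ev.
            \<rho>t \<in> feasible I Obs ov
          \<and> (\<forall>j<CARD('n). \<forall>k<CARD('n). cinner_vec (rv j) (rv k) = (if j = k then 1 else 0))
          \<and> (\<forall>j<CARD('n). \<forall>k<CARD('n). cinner_vec (ev j) (ev k) = (if j = k then 1 else 0))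
          \<and> \<rho>t = (\<Sum>j<CARD('n). rt j *\<^sub>R outer (rv j) (rv j))
          \<and> H = (\<Sum>j<CARD('n). E j *\<^sub>R outer (ev j) (ev j))
          \<and> (\<forall>j k. j \<le> k \<and> k < CARD('n) \<longrightarrow> rt k \<le> rt j)
          \<and> (\<forall>j k. j \<le> k \<and> k < CARD('n) \<longrightarrow> E j \<le> E k)
          \<longrightarrow> (INF X\<in>feasible I Obs ov.
                 work H X (\<Sum>j<CARD('n). outer (ev j) (rv j))) \<le> ergotropy \<rho> H)"
proof -
  let ?F = "feasible I Obs ov" and ?U = "{V. unitary V}"
  have bounded: "\<bar>work H X V\<bar> \<le> 2 * (\<Sum>i\<in>UNIV. \<Sum>k\<in>UNIV. cmod (H$i$k))"
    if "X \<in> ?F" "V \<in> ?U" for X V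
    using that by (simp add: abs_work_le density_of_feasible)
  have \<rho>_feasible: "\<rho> \<in> ?F"
    using assms(4,5) by (rule feasible_of_density)
  have sandwich: "(INF X\<in>?F. work H X U) \<le> (INF X\<in>?F. SUP V\<in>?U. work H X V)
      \<and> (INF X\<in>?F. SUP V\<in>?U. work H X V) \<le> ergotropy \<rho> H" if "U \<in> ?U" for U
    using INF_le_INF_SUP_le_SUP[where f = "work H", OF bounded \<rho>_feasible that]
    unfolding ergotropy_def by simp
  have U_star_bound: "(INF X\<in>?F. work H X (\<Sum>j<CARD('n). outer (ev j) (rv j))) \<le> ergotropy \<rho> H"
    if "\<forall>j<CARD('n). \<forall>k<CARD('n). cinner_vec (rv j) (rv k) = (if j = k then 1 else 0)"
      and "\<forall>j<CARD('n). \<forall>k<CARD('n). cinner_vec (ev j) (ev k) = (if j = k then 1 else 0)"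
    for rv ev :: "nat \<Rightarrow> complex^'n"
    using sandwich[OF CollectI, OF unitary_sum_outer_orthonormal[OF that(2,1)]] by linarith
  show ?thesis
    using sandwich U_star_bound by blast
qed

end
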